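(* Let $n\geq2$, $p\in\mathbb{N}$, $s\in[p]$ and $t_0\in[n-1]$. Let $\Sigma_1,\Sigma_2\in\mathbb{R}^{p\times p}$ be symmetric positive definite and $\sigma^2=\|\Sigma_1\|_{\mathrm{op}}\vee\|\Sigma_2\|_{\mathrm{op}}$. Let $\Delta=\min(t_0,n-t_0)$ and $\gamma=s\log(ep/s)\vee\log\log(8n)$. Suppose that for some constant $c>0$, $$\Delta\Big\{\Big(\frac{\lambda^s_{\max}(\Sigma_1-\Sigma_2)}{\sigma^2-\lambda^s_{\max}(\Sigma_1-\Sigma_2)}\Big)\wedge\Big(\frac{\lambda^s_{\max}(\Sigma_1-\Sigma_2)}{\sigma^2-\lambda^s_{\max}(\Sigma_1-\Sigma_2)}\Big)^2\Big\}\geq c\gamma.$$ Then $$\sup_{v\in S^{p-1}_s}\ \frac{v^\top\Sigma_1v}{v^\top\Sigma_2v}\vee\frac{v^\top\Sigma_2v}{v^\top\Sigma_1v}\geq 1+c\frac{\gamma}{\Delta}\vee\sqrt{c\frac{\gamma}{\Delta}}.$$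
   Context: $S^{p-1}_s=\{v\in\mathbb{R}^p:\|v\|_2=1,\ \|v\|_0\leq s\}$, and for symmetric $A$, $\lambda^s_{\max}(A)=\sup_{v\in S^{p-1}_s}|v^\top Av|$. $\log$ is the natural logarithm. *)

theory Defs
  imports "HOL-Analysis.Analysis"
begin

definition sparse_sphere :: "nat \<Rightarrow> (real ^ 'p) set" where
  "sparse_sphere s = {v. norm v = 1 \<and> card {i. v $ i \<noteq> 0} \<le> s}"

definition lambda_s_max :: "nat \<Rightarrow> real ^ 'p ^ 'p \<Rightarrow> real" where
  "lambda_s_max s A = (SUP v \<in> sparse_sphere s. \<bar>v \<bullet> (A *v v)\<bar>)"

definition op_norm :: "real ^ 'p ^ 'p \<Rightarrow> real" where
  "op_norm A = onorm (\<lambda>x. A *v x)"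

definition sym_posdef :: "real ^ 'p ^ 'p \<Rightarrow> bool" where
  "sym_posdef A \<longleftrightarrow> transpose A = A \<and> (\<forall>x. x \<noteq> 0 \<longrightarrow> x \<bullet> (A *v x) > 0)"

end

theory Submission
  imports Defs
begin

text \<open>
  For a sparse unit vector \<open>v\<close> write \<open>a = v\<^sup>T \<Sigma>\<^sub>1 v\<close>, \<open>b = v\<^sup>T \<Sigma>\<^sub>2 v\<close>,
  let \<open>R\<close> be the larger of \<open>a/b\<close> and \<open>b/a\<close>, and \<open>S\<close> the supremum of \<open>R\<close>
  over the sparse sphere. Since \<open>a, b \<le> \<sigma>\<^sup>2\<close>, one has
  \<open>|a - b| \<le> \<sigma>\<^sup>2 (1 - 1/R) \<le> \<sigma>\<^sup>2 (1 - 1/S)\<close>, and taking the supremum over \<open>v\<close>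
  gives \<open>\<lambda> \<le> \<sigma>\<^sup>2 (1 - 1/S)\<close> for \<open>\<lambda> = \<lambda>\<^sup>s\<^sub>m\<^sub>a\<^sub>x(\<Sigma>\<^sub>1 - \<Sigma>\<^sub>2)\<close>,
  i.e. \<open>S \<ge> \<sigma>\<^sup>2/(\<sigma>\<^sup>2 - \<lambda>) = 1 + r\<close>. The hypothesis \<open>\<Delta> min(r, r\<^sup>2) \<ge> c\<gamma>\<close>
  says precisely that \<open>r\<close> dominates both \<open>c\<gamma>/\<Delta>\<close> and its square root.
\<close>

abbreviation quad_form :: "real ^ 'n ^ 'n \<Rightarrow> real ^ 'n \<Rightarrow> real" where
  "quad_form A v \<equiv> v \<bullet> (A *v v)"

definition quad_form_ratio :: "real ^ 'n ^ 'n \<Rightarrow> real ^ 'n ^ 'n \<Rightarrow> real ^ 'n \<Rightarrow> real" where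
  "quad_form_ratio A B v = max (quad_form A v / quad_form B v) (quad_form B v / quad_form A v)"

lemma one_le_max_divide:
  fixes a b :: real
  assumes "0 < a" "0 < b"
  shows "1 \<le> max (a / b) (b / a)"
  using assms by (cases "b \<le> a") (auto simp: le_max_iff_disj)

lemma abs_diff_le_sub_divide_max_divide:
  fixes a b \<sigma> :: real
  assumes "0 < a" "0 < b" "a \<le> \<sigma>" "b \<le> \<sigma>"
  shows "\<bar>a - b\<bar> \<le> \<sigma> - \<sigma> / max (a / b) (b / a)"
proof -
  have *: "\<bar>x - y\<bar> \<le> \<sigma> - \<sigma> / max (x / y) (y / x)"
    if "y \<le> x" "0 < y" "x \<le> \<sigma>" for x y :: real
  proof -
    have "y / x \<le> 1" "1 \<le> x / y" using that by (simp_all add: divide_le_eq le_divide_eq)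
    then have max: "max (x / y) (y / x) = x / y" by (simp add: max_def)
    have "\<bar>x - y\<bar> = x * (1 - y / x)" using that by (simp add: field_simps)
    also have "\<dots> \<le> \<sigma> * (1 - y / x)"
      using that \<open>y / x \<le> 1\<close> by (intro mult_right_mono) auto
    also have "\<dots> = \<sigma> - \<sigma> / (x / y)" by (simp add: field_simps)
    finally show ?thesis using max by simp
  qed
  show ?thesis
  proof (cases "b \<le> a")
    case True
    then show ?thesis using * assms by blast
  next
    case False
    then show ?thesis using *[of a b] assms by (simp add: abs_minus_commute max.commute)
  qed
qed

lemma max_sqrt_le_of_le_min_power2:
  fixes x r :: real
  assumes "0 \<le> x" "x \<le> min r (r ^ 2)"
  shows "max x (sqrt x) \<le> r"
proof -
  have "0 \<le> r" "x \<le> r" "x \<le> r ^ 2" using assms by auto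
  then show ?thesis using real_sqrt_le_mono[of x "r ^ 2"] by simp
qed

lemma sparsity_entropy_pos:
  assumes "1 \<le> s" "s \<le> p"
  shows "0 < real s * ln (exp 1 * real p / real s)"
proof -
  have "1 < exp (1::real)" by simp
  also have "exp 1 \<le> exp 1 * real p / real s" using assms by (simp add: le_divide_eq)
  finally show ?thesis using assms by simp
qed

lemma op_norm_nonneg: "0 \<le> op_norm A"
  unfolding op_norm_def by (rule onorm_pos_le[OF matrix_vector_mul_bounded_linear])

lemma quad_form_le_op_norm:
  assumes "norm v = 1"
  shows "quad_form A v \<le> op_norm A"
proof -
  have "quad_form A v \<le> norm v * norm (A *v v)" by (metis Cauchy_Schwarz_ineq2 abs_le_iff)
  also have "norm (A *v v) \<le> op_norm A * norm v"
    unfolding op_norm_def by (rule onorm[OF matrix_vector_mul_bounded_linear])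
  finally show ?thesis using assms by simp
qed

lemma sym_posdef_quad_form_pos:
  "sym_posdef A \<Longrightarrow> norm v = 1 \<Longrightarrow> 0 < quad_form A v"
  unfolding sym_posdef_def by (metis norm_zero zero_neq_one)

lemma sym_posdef_quad_form_lower_bound:
  assumes "sym_posdef A"
  obtains \<mu> where "0 < \<mu>" "\<And>v. norm v = 1 \<Longrightarrow> \<mu> \<le> quad_form A v"
proof -
  have "continuous_on (sphere 0 1) (quad_form A)"
    by (intro continuous_intros linear_continuous_on matrix_vector_mul_linear)
  moreover have "axis undefined 1 \<in> sphere (0 :: real ^ 'n) 1"
    by simp
  ultimately obtain x where "x \<in> sphere 0 1" "\<forall>y \<in> sphere 0 1. quad_form A x \<le> quad_form A y"
    using continuous_attains_inf[OF compact_sphere] by blast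
  then show ?thesis using that[of "quad_form A x"] sym_posdef_quad_form_pos[OF assms] by simp
qed

lemma bdd_above_quad_form_ratio:
  assumes "sym_posdef A" "sym_posdef B"
  shows "bdd_above (quad_form_ratio A B ` sphere 0 1)"
proof -
  obtain \<mu>A where \<mu>A: "0 < \<mu>A" "\<And>v. norm v = 1 \<Longrightarrow> \<mu>A \<le> quad_form A v"
    using sym_posdef_quad_form_lower_bound[OF assms(1)] by blast
  obtain \<mu>B where \<mu>B: "0 < \<mu>B" "\<And>v. norm v = 1 \<Longrightarrow> \<mu>B \<le> quad_form B v"
    using sym_posdef_quad_form_lower_bound[OF assms(2)] by blast
  have "quad_form_ratio A B v \<le> max (op_norm A / \<mu>B) (op_norm B / \<mu>A)" if "norm v = 1" for v
    unfolding quad_form_ratio_def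
    using frac_le[OF op_norm_nonneg quad_form_le_op_norm[OF that] \<mu>B(1) \<mu>B(2)[OF that]]
      frac_le[OF op_norm_nonneg quad_form_le_op_norm[OF that] \<mu>A(1) \<mu>A(2)[OF that]]
    by (simp add: max.coboundedI1 max.coboundedI2)
  then show ?thesis by (intro bdd_aboveI2) simp
qed

lemma sparse_sphere_subset_sphere: "sparse_sphere s \<subseteq> sphere 0 1"
  unfolding sparse_sphere_def by auto

lemma axis_in_sparse_sphere:
  assumes "1 \<le> s"
  shows "axis k 1 \<in> sparse_sphere s"
proof -
  have "{i. axis k (1::real) $ i \<noteq> 0} = {k}" by (auto simp: axis_def)
  then show ?thesis using assms by (simp add: sparse_sphere_def)
qed

lemma bdd_above_quad_form_ratio_sparse_sphere:
  assumes "sym_posdef A" "sym_posdef B"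
  shows "bdd_above (quad_form_ratio A B ` sparse_sphere s)"
  by (rule bdd_above_mono[OF bdd_above_quad_form_ratio[OF assms]
        image_mono[OF sparse_sphere_subset_sphere]])

lemma one_le_sparse_sup_quad_form_ratio:
  assumes "sym_posdef A" "sym_posdef B" "1 \<le> s"
  shows "1 \<le> (SUP v \<in> sparse_sphere s. quad_form_ratio A B v)"
proof -
  have "1 \<le> quad_form_ratio A B (axis undefined 1)"
    unfolding quad_form_ratio_def using assms(1,2)
    by (intro one_le_max_divide sym_posdef_quad_form_pos norm_axis_1)
  then show ?thesis
    using cSUP_upper2[OF bdd_above_quad_form_ratio_sparse_sphere[OF assms(1,2)]
        axis_in_sparse_sphere[OF assms(3)]] by blast
qed

lemma lambda_s_max_diff_le_sparse_sup_quad_form_ratio: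
  fixes A B :: "real ^ 'n ^ 'n"
  assumes "sym_posdef A" "sym_posdef B" "1 \<le> s"
  defines "\<sigma> \<equiv> max (op_norm A) (op_norm B)"
    and "S \<equiv> SUP v \<in> sparse_sphere s. quad_form_ratio A B v"
  shows "lambda_s_max s (A - B) \<le> \<sigma> - \<sigma> / S"
  unfolding lambda_s_max_def
proof (rule cSUP_least)
  show "sparse_sphere s \<noteq> {}" using axis_in_sparse_sphere[OF assms(3)] by blast
next
  fix v :: "real ^ 'n"
  assume v: "v \<in> sparse_sphere s"
  then have unit: "norm v = 1" by (simp add: sparse_sphere_def)
  have pos: "0 < quad_form A v" "0 < quad_form B v"
    using sym_posdef_quad_form_pos[OF _ unit] assms(1,2) by auto
  have "\<bar>quad_form (A - B) v\<bar> = \<bar>quad_form A v - quad_form B v\<bar>"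
    by (simp add: matrix_vector_mult_diff_rdistrib inner_diff_right)
  also have "\<dots> \<le> \<sigma> - \<sigma> / quad_form_ratio A B v"
    unfolding quad_form_ratio_def \<sigma>_def using pos quad_form_le_op_norm[OF unit]
    by (intro abs_diff_le_sub_divide_max_divide) (auto intro: max.coboundedI1 max.coboundedI2)
  also have "\<dots> \<le> \<sigma> - \<sigma> / S"
  proof -
    have "1 \<le> quad_form_ratio A B v"
      unfolding quad_form_ratio_def using pos by (rule one_le_max_divide)
    moreover have "quad_form_ratio A B v \<le> S"
      unfolding S_def by (rule cSUP_upper[OF v bdd_above_quad_form_ratio_sparse_sphere[OF assms(1,2)]])
    moreover have "0 \<le> \<sigma>" unfolding \<sigma>_def by (simp add: op_norm_nonneg max.coboundedI1)
    ultimately show ?thesis by (intro diff_left_mono divide_left_mono) auto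
  qed
  finally show "\<bar>quad_form (A - B) v\<bar> \<le> \<sigma> - \<sigma> / S" .
qed

theorem lemma10:
  fixes n s t0 :: nat and \<Sigma>1 \<Sigma>2 :: "real ^ 'p ^ 'p" and c :: real
  assumes "n \<ge> 2"
    and "1 \<le> s" and "s \<le> CARD('p)"
    and "1 \<le> t0" and "t0 \<le> n - 1"
    and "sym_posdef \<Sigma>1" and "sym_posdef \<Sigma>2"
    and "c > 0"
  defines "\<Delta> \<equiv> real (min t0 (n - t0))"
    and "\<gamma> \<equiv> max (real s * ln (exp 1 * real CARD('p) / real s)) (ln (ln (8 * real n)))"
    and "r \<equiv> lambda_s_max s (\<Sigma>1 - \<Sigma>2) / (max (op_norm \<Sigma>1) (op_norm \<Sigma>2) - lambda_s_max s (\<Sigma>1 - \<Sigma>2))"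
  assumes "\<Delta> * min r (r ^ 2) \<ge> c * \<gamma>"
  shows "(SUP v \<in> (sparse_sphere s :: (real ^ 'p) set).
            max ((v \<bullet> (\<Sigma>1 *v v)) / (v \<bullet> (\<Sigma>2 *v v))) ((v \<bullet> (\<Sigma>2 *v v)) / (v \<bullet> (\<Sigma>1 *v v))))
         \<ge> 1 + max (c * \<gamma> / \<Delta>) (sqrt (c * \<gamma> / \<Delta>))"
proof -
  define \<sigma> where "\<sigma> = max (op_norm \<Sigma>1) (op_norm \<Sigma>2)"
  define \<delta> where "\<delta> = lambda_s_max s (\<Sigma>1 - \<Sigma>2)"
  define S where "S = (SUP v \<in> sparse_sphere s. quad_form_ratio \<Sigma>1 \<Sigma>2 v)"
  have "0 < \<Delta>" using assms(4,5) by (simp add: \<Delta>_def)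
  moreover have "0 < \<gamma>" using sparsity_entropy_pos[OF assms(2,3)] by (simp add: \<gamma>_def)
  ultimately have "c * \<gamma> / \<Delta> \<le> min r (r ^ 2)"
    using assms(12) by (metis pos_divide_le_eq mult.commute)
  then have r_ge: "max (c * \<gamma> / \<Delta>) (sqrt (c * \<gamma> / \<Delta>)) \<le> r"
    using \<open>0 < \<Delta>\<close> \<open>0 < \<gamma>\<close> assms(8) by (intro max_sqrt_le_of_le_min_power2) auto
  moreover have "0 < c * \<gamma> / \<Delta>" using \<open>0 < \<Delta>\<close> \<open>0 < \<gamma>\<close> assms(8) by simp
  ultimately have "0 < \<delta> / (\<sigma> - \<delta>)" unfolding r_def \<delta>_def \<sigma>_def by linarith
  have gap: "0 < \<sigma> - \<delta>"
  proof (rule ccontr)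
    assume "\<not> 0 < \<sigma> - \<delta>"
    moreover have "0 \<le> \<sigma>" by (simp add: \<sigma>_def op_norm_nonneg max.coboundedI1)
    ultimately have "\<delta> / (\<sigma> - \<delta>) \<le> 0" by (intro divide_nonneg_nonpos) auto
    with \<open>0 < \<delta> / (\<sigma> - \<delta>)\<close> show False by linarith
  qed
  have "\<delta> \<le> \<sigma> - \<sigma> / S" and "1 \<le> S"
    unfolding \<delta>_def \<sigma>_def S_def using assms(2,6,7)
    by (simp_all add: lambda_s_max_diff_le_sparse_sup_quad_form_ratio
        one_le_sparse_sup_quad_form_ratio)
  then have "\<sigma> / (\<sigma> - \<delta>) \<le> S" using gap by (simp add: field_simps)
  moreover have "\<sigma> / (\<sigma> - \<delta>) = 1 + r" using gap by (simp add: r_def \<delta>_def \<sigma>_def field_simps)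
  ultimately have "1 + r \<le> S" by simp
  with r_ge show ?thesis unfolding S_def quad_form_ratio_def by linarith
qed

end
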